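(* Let $R$ be a ring and $a\in R$ an element which is not nilpotent. Then there exists a prime ideal $I$ of $R$ such that $a+I$ is a minimal non-nilpotent element of the factor ring $R/I$.
   Context: All rings are associative with unit; "ideal" means two-sided ideal. For an ideal $J$ of a ring $S$, an element $b\in S$ is nilpotent modulo $J$ if $b^n\in J$ for some $n\in\mathbb N$. An element $b$ of a ring $S$ is minimal non-nilpotent if $b$ is not nilpotent and $b$ is nilpotent modulo $J$ for every non-zero ideal $J$ of $S$. *)

theory Defs
  imports "HOL-Algebra.QuotRing" "HOL-Algebra.Ideal_Product"
begin

text \<open>Prime ideal of a (not necessarily commutative) ring: a proper two-sided ideal P
  such that for all two-sided ideals A, B with A B contained in P, A or B is contained in P.
  (The library notion primeideal requires a commutative ring.)\<close>
definition ring_prime_ideal :: "'a set \<Rightarrow> ('a, 'b) ring_scheme \<Rightarrow> bool" where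
  "ring_prime_ideal P R \<longleftrightarrow> ideal P R \<and> P \<noteq> carrier R \<and>
     (\<forall>A B. ideal A R \<longrightarrow> ideal B R \<longrightarrow> ideal_prod R A B \<subseteq> P \<longrightarrow> A \<subseteq> P \<or> B \<subseteq> P)"

definition nilpotent_mod :: "('a, 'b) ring_scheme \<Rightarrow> 'a set \<Rightarrow> 'a \<Rightarrow> bool" where
  "nilpotent_mod S J b \<longleftrightarrow> (\<exists>n::nat. n \<ge> 1 \<and> b [^]\<^bsub>S\<^esub> n \<in> J)"

definition nilpotent_elem :: "('a, 'b) ring_scheme \<Rightarrow> 'a \<Rightarrow> bool" where
  "nilpotent_elem S b \<longleftrightarrow> nilpotent_mod S {\<zero>\<^bsub>S\<^esub>} b"

definition minimal_non_nilpotent :: "('a, 'b) ring_scheme \<Rightarrow> 'a \<Rightarrow> bool" where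
  "minimal_non_nilpotent S b \<longleftrightarrow> \<not> nilpotent_elem S b \<and>
     (\<forall>J. ideal J S \<longrightarrow> J \<noteq> {\<zero>\<^bsub>S\<^esub>} \<longrightarrow> nilpotent_mod S J b)"

end

theory Submission
  imports Defs "HOL-Algebra.Ring_Divisibility"
begin

text \<open>Zorn's lemma yields an ideal \<open>I\<close> maximal among the ideals containing no power of \<open>a\<close>.
  Such an ideal is prime: if \<open>A\<close> and \<open>B\<close> are not contained in \<open>I\<close>, then \<open>A <+> I\<close> and \<open>B <+> I\<close>
  contain powers \<open>a\<^sup>m\<close> and \<open>a\<^sup>n\<close>, and \<open>A B \<subseteq> I\<close> forces \<open>a\<^sup>m\<^sup>+\<^sup>n \<in> I\<close>. In \<open>R/I\<close> the coset of \<open>a\<close> is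
  not nilpotent, while every nonzero ideal of \<open>R/I\<close> is the image of an ideal properly containing
  \<open>I\<close>, which by maximality contains a power of \<open>a\<close>.\<close>

lemma (in ring) set_add_mult_mem_of_ideal_prod_subset:
  assumes A: "ideal A R" and B: "ideal B R" and I: "ideal I R"
    and AB: "ideal_prod R A B \<subseteq> I"
    and x: "x \<in> A <+>\<^bsub>R\<^esub> I" and y: "y \<in> B <+>\<^bsub>R\<^esub> I"
  shows "x \<otimes> y \<in> I"
proof -
  interpret I: ideal I R by fact
  obtain a i where a: "a \<in> A" and i: "i \<in> I" and x_eq: "x = a \<oplus> i"
    using x unfolding set_add_def' by blast
  obtain b j where b: "b \<in> B" and j: "j \<in> I" and y_eq: "y = b \<oplus> j"
    using y unfolding set_add_def' by blast
  have carr: "a \<in> carrier R" "b \<in> carrier R" "i \<in> carrier R" "j \<in> carrier R"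
    using a b i j ideal.Icarr[OF A] ideal.Icarr[OF B] I.Icarr by auto
  have "x \<otimes> y = (a \<otimes> b \<oplus> a \<otimes> j) \<oplus> i \<otimes> (b \<oplus> j)"
    unfolding x_eq y_eq using carr by (simp add: l_distr r_distr a_ac)
  moreover have "a \<otimes> b \<in> I"
    using AB ideal_prod.prod[OF a b] by blast
  ultimately show ?thesis
    using carr i j by (simp add: I.a_closed I.I_l_closed I.I_r_closed)
qed

definition maximal_power_avoiding_ideal :: "('a, 'b) ring_scheme \<Rightarrow> 'a \<Rightarrow> 'a set \<Rightarrow> bool" where
  "maximal_power_avoiding_ideal R a I \<longleftrightarrow> ideal I R \<and> \<not> nilpotent_mod R I a \<and>
     (\<forall>J. ideal J R \<longrightarrow> I \<subset> J \<longrightarrow> nilpotent_mod R J a)"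

lemma maximal_power_avoiding_idealD:
  assumes "maximal_power_avoiding_ideal R a I"
  shows "ideal I R" and "\<not> nilpotent_mod R I a"
    and "\<And>J. ideal J R \<Longrightarrow> I \<subset> J \<Longrightarrow> nilpotent_mod R J a"
  using assms unfolding maximal_power_avoiding_ideal_def by auto

lemma (in ring) exists_maximal_power_avoiding_ideal:
  assumes "\<not> nilpotent_elem R a"
  shows "\<exists>I. maximal_power_avoiding_ideal R a I"
proof -
  define F where "F = {J. ideal J R \<and> \<not> nilpotent_mod R J a}"
  have "\<exists>M\<in>F. \<forall>X\<in>F. M \<subseteq> X \<longrightarrow> X = M"
  proof (rule subset_Zorn_nonempty)
    show "F \<noteq> {}"
      using assms zeroideal unfolding F_def nilpotent_elem_def by auto
  next
    fix C assume C: "C \<noteq> {}" "subset.chain F C"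
    have "subset.chain {J. ideal J R} C"
      using C(2) unfolding pred_on.chain_def F_def by auto
    from chain_Union_is_ideal[OF this] C(1) have "ideal (\<Union>C) R"
      by simp
    moreover have "\<not> nilpotent_mod R (\<Union>C) a"
      using C(2) unfolding pred_on.chain_def F_def nilpotent_mod_def by blast
    ultimately show "\<Union>C \<in> F" unfolding F_def by simp
  qed
  then show ?thesis
    unfolding F_def maximal_power_avoiding_ideal_def by blast
qed

lemma (in ring) maximal_power_avoiding_ideal_is_prime:
  assumes a: "a \<in> carrier R" and "maximal_power_avoiding_ideal R a I"
  shows "ring_prime_ideal I R"
proof -
  note I = maximal_power_avoiding_idealD(1)[OF assms(2)]
    and not_nil = maximal_power_avoiding_idealD(2)[OF assms(2)]
    and maximal = maximal_power_avoiding_idealD(3)[OF assms(2)]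
  have power_in_sum: "\<exists>n::nat\<ge>1. a [^] n \<in> X <+> I" if X: "ideal X R" "\<not> X \<subseteq> I" for X
  proof -
    have "X \<union> I \<subseteq> X <+> I"
      using genideal_self union_genideal[OF X(1) I] X(1) I
      by (metis Un_subset_iff additive_subgroup.a_subset ideal.axioms(1))
    then have "I \<subset> X <+> I"
      using X(2) by blast
    then show ?thesis
      using maximal[OF add_ideals[OF X(1) I]] unfolding nilpotent_mod_def by blast
  qed
  have "A \<subseteq> I \<or> B \<subseteq> I" if A: "ideal A R" and B: "ideal B R" and AB: "ideal_prod R A B \<subseteq> I" for A B
  proof (rule ccontr)
    assume "\<not> (A \<subseteq> I \<or> B \<subseteq> I)"
    then obtain m n :: nat where m: "m \<ge> 1" "a [^] m \<in> A <+> I" and n: "n \<ge> 1" "a [^] n \<in> B <+> I"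
      using power_in_sum A B by blast
    have "a [^] (m + n) = a [^] m \<otimes> a [^] n"
      using a by (simp add: nat_pow_mult)
    also have "\<dots> \<in> I"
      using set_add_mult_mem_of_ideal_prod_subset[OF A B I AB m(2) n(2)] .
    finally show False
      using not_nil m(1) unfolding nilpotent_mod_def by auto
  qed
  moreover have "I \<noteq> carrier R"
    using not_nil a unfolding nilpotent_mod_def by force
  ultimately show ?thesis
    unfolding ring_prime_ideal_def using I by blast
qed

lemma (in ideal) nilpotent_mod_quot_iff:
  assumes "J \<subseteq> carrier (R Quot I)" and "a \<in> carrier R"
  shows "nilpotent_mod (R Quot I) J (I +> a) \<longleftrightarrow> nilpotent_mod R (\<Union>J) a"
proof -
  have "(I +> a) [^]\<^bsub>R Quot I\<^esub> n = I +> a [^] n" for n :: nat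
    using ring_hom_ring.hom_nat_pow[OF rcos_ring_hom_ring assms(2)] by simp
  then show ?thesis
    unfolding nilpotent_mod_def
    using canonical_proj_vimage_mem_iff[OF is_ideal assms(1)] assms(2) by simp
qed

lemma (in ideal) nilpotent_elem_quot_iff:
  assumes "a \<in> carrier R"
  shows "nilpotent_elem (R Quot I) (I +> a) \<longleftrightarrow> nilpotent_mod R I a"
proof -
  have "\<zero>\<^bsub>R Quot I\<^esub> = I" and "I \<in> carrier (R Quot I)"
    using ring.ring_simprules(2)[OF quotient_is_ring] unfolding FactRing_def by simp_all
  then show ?thesis
    unfolding nilpotent_elem_def using nilpotent_mod_quot_iff[OF _ assms, of "{I}"] by simp
qed

lemma (in ideal) quot_ideal_vimage_psupset:
  assumes J: "ideal J (R Quot I)" and nonzero: "J \<noteq> {\<zero>\<^bsub>R Quot I\<^esub>}"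
  shows "I \<subset> \<Union>J"
proof -
  have J_carr: "J \<subseteq> carrier (R Quot I)"
    using additive_subgroup.a_subset[OF ideal.axioms(1)[OF J]] by simp
  have zero_quot: "\<zero>\<^bsub>R Quot I\<^esub> = I"
    unfolding FactRing_def by simp
  with J have "I \<in> J"
    using additive_subgroup.zero_closed[OF ideal.axioms(1)[OF J]] by simp
  moreover obtain c where c: "c \<in> J" "c \<noteq> I"
    using nonzero \<open>I \<in> J\<close> unfolding zero_quot by blast
  moreover obtain r where r: "r \<in> carrier R" "c = I +> r"
    using c(1) J_carr unfolding FactRing_def A_RCOSETS_def' by auto
  ultimately have "I \<subseteq> \<Union>J" and "r \<in> \<Union>J - I"
    using a_rcos_const canonical_proj_vimage_mem_iff[OF is_ideal J_carr r(1)] by auto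
  then show ?thesis by blast
qed

lemma (in ideal) maximal_power_avoiding_ideal_minimal_non_nilpotent_quot:
  assumes a: "a \<in> carrier R" and "maximal_power_avoiding_ideal R a I"
  shows "minimal_non_nilpotent (R Quot I) (I +> a)"
  unfolding minimal_non_nilpotent_def
proof (intro conjI allI impI)
  show "\<not> nilpotent_elem (R Quot I) (I +> a)"
    using nilpotent_elem_quot_iff[OF a] maximal_power_avoiding_idealD(2)[OF assms(2)] by simp
next
  fix J assume J: "ideal J (R Quot I)" and nonzero: "J \<noteq> {\<zero>\<^bsub>R Quot I\<^esub>}"
  have "nilpotent_mod R (\<Union>J) a"
    using maximal_power_avoiding_idealD(3)[OF assms(2) quot_ideal_imp_ring_ideal[OF is_ideal J]
        quot_ideal_vimage_psupset[OF J nonzero]] .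
  then show "nilpotent_mod (R Quot I) J (I +> a)"
    using nilpotent_mod_quot_iff[OF _ a] additive_subgroup.a_subset[OF ideal.axioms(1)[OF J]]
    by simp
qed

theorem mainTheorem2:
  fixes R :: "('a, 'b) ring_scheme" and a :: 'a
  assumes "ring R"
    and "a \<in> carrier R"
    and "\<not> nilpotent_elem R a"
  shows "\<exists>I. ring_prime_ideal I R \<and> minimal_non_nilpotent (R Quot I) (I +>\<^bsub>R\<^esub> a)"
proof -
  interpret ring R by fact
  obtain I where I: "maximal_power_avoiding_ideal R a I"
    using exists_maximal_power_avoiding_ideal[OF assms(3)] by blast
  have "ring_prime_ideal I R"
    using maximal_power_avoiding_ideal_is_prime[OF assms(2) I] .
  moreover have "minimal_non_nilpotent (R Quot I) (I +>\<^bsub>R\<^esub> a)"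
    using ideal.maximal_power_avoiding_ideal_minimal_non_nilpotent_quot
      [OF maximal_power_avoiding_idealD(1)[OF I] assms(2) I] .
  ultimately show ?thesis by blast
qed

end
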